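(* Let $e_1,e_2$ be KAT expressions. Every execution of $\mathsf{equiv}(\{(\{e_1\},\{e_2\})\},\emptyset)$ terminates (i.e. after finitely many recursive calls it returns $\mathsf{True}$ or $\mathsf{False}$), regardless of which pair is selected from $S$ at each call.
   Context: Let $\Sigma$ be a finite nonempty set of action symbols and $T=\{t_1,\dots,t_l\}$ a finite nonempty set of test symbols. Boolean expressions: $b::=0\mid 1\mid t\mid \overline{b}\mid b_1+b_2\mid b_1 b_2$; KAT expressions (syntactic terms): $e::=p\in\Sigma\mid b\mid e_1+e_2\mid e_1e_2\mid e^*$. $\mathsf{At}$ is the set of atoms (words $b_1\cdots b_l$ with $b_i\in\{t_i,\overline{t_i}\}$), identified with truth assignments to $T$; $\alpha\le b$ means $b$ is true under $\alpha$. $\mathsf{E}_\alpha(p)=0$; $\mathsf{E}_\alpha(b)=1$ iff $\alpha\le b$; $\mathsf{E}_\alpha(e_1+e_2)=\max(\mathsf{E}_\alpha(e_1),\mathsf{E}_\alpha(e_2))$; $\mathsf{E}_\alpha(e_1e_2)=\mathsf{E}_\alpha(e_1)\mathsf{E}_\alpha(e_2)$; $\mathsf{E}_\alpha(e^* )=1$; for a finite set $E$ of expressions, $\mathsf{E}_\alpha(E)=\max_{e\in E}\mathsf{E}_\alpha(e)$ ($0$ if $E=\emptyset$). The function $\mathsf{f}$ maps an expression to a set of pairs in $(\mathsf{At}\cdot\Sigma)\times\mathsf{Exp}$: $\mathsf{f}(p)=\{(\alpha p,1)\mid\alpha\in\mathsf{At}\}$; $\mathsf{f}(b)=\emptyset$;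 $\mathsf{f}(e_1+e_2)=\mathsf{f}(e_1)\cup\mathsf{f}(e_2)$; $\mathsf{f}(e_1e_2)=\mathsf{f}(e_1)\cdot e_2\cup\{(\alpha p,e)\in\mathsf{f}(e_2)\mid\mathsf{E}_\alpha(e_1)=1\}$; $\mathsf{f}(e^* )=\mathsf{f}(e)\cdot e^*$, where $P\cdot e=\{(\alpha p,e'e)\mid(\alpha p,e')\in P\}$ if $e$ is neither the constant $0$ nor $1$, $P\cdot0=\emptyset$, $P\cdot1=P$. For a set $E$, $\mathsf{f}(E)=\bigcup_{e\in E}\mathsf{f}(e)$, $\mathsf{der}_{\alpha p}(E)=\{e'\mid(\alpha p,e')\in\mathsf{f}(E)\}$, and $\mathsf{hd}(E)=\{\alpha p\mid(\alpha p,e')\in\mathsf{f}(E)\}$. Define $\mathsf{derivatives}(E_1,E_2)=\{(\mathsf{der}_{\alpha p}(E_1),\mathsf{der}_{\alpha p}(E_2))\mid\alpha p\in\mathsf{hd}(E_1\cup E_2)\}$. The procedure $\mathsf{equiv}(S,H)$, where $S,H$ are sets of pairs of finite sets of KAT expressions, is: $\mathsf{equiv}(\emptyset,H)=\mathsf{True}$; otherwise choose some pair $(E_1,E_2)\in S$ and write $S=\{(E_1,E_2)\}\cup S_0$ with $(E_1,E_2)\notin S_0$; if there exists $\alpha\in\mathsf{At}$ with $\mathsf{E}_\alpha(E_1)\ne\mathsf{E}_\alpha(E_2)$ return $\mathsf{False}$; otherwise let $H'=\{(E_1,E_2)\}\cup H$, $S'=\{d\in\mathsf{derivatives}(E_1,E_2)\mid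 d\notin H'\}$, and return $\mathsf{equiv}(S_0\cup S',H')$. *)

theory Defs
  imports Main
begin

text \<open>Test symbols form the finite type 't, action symbols the finite type 'p
 (types are nonempty). Atoms are truth assignments to the test symbols.\<close>

type_synonym 't atom = "'t \<Rightarrow> bool"

datatype 't bexp = BZero | BOne | BTest 't | BNot "'t bexp"
  | BPlus "'t bexp" "'t bexp" | BTimes "'t bexp" "'t bexp"

datatype ('p, 't) kat = Act 'p | Test "'t bexp"
  | Plus "('p, 't) kat" "('p, 't) kat" | Times "('p, 't) kat" "('p, 't) kat"
  | Star "('p, 't) kat"

fun beval :: "'t atom \<Rightarrow> 't bexp \<Rightarrow> bool" where
  "beval \<alpha> BZero = False"
| "beval \<alpha> BOne = True"
| "beval \<alpha> (BTest t) = \<alpha> t"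
| "beval \<alpha> (BNot b) = (\<not> beval \<alpha> b)"
| "beval \<alpha> (BPlus b1 b2) = (beval \<alpha> b1 \<or> beval \<alpha> b2)"
| "beval \<alpha> (BTimes b1 b2) = (beval \<alpha> b1 \<and> beval \<alpha> b2)"

text \<open>E_alpha, with value 1 rendered as True and 0 as False\<close>
fun Eps :: "'t atom \<Rightarrow> ('p, 't) kat \<Rightarrow> bool" where
  "Eps \<alpha> (Act p) = False"
| "Eps \<alpha> (Test b) = beval \<alpha> b"
| "Eps \<alpha> (Plus e1 e2) = (Eps \<alpha> e1 \<or> Eps \<alpha> e2)"
| "Eps \<alpha> (Times e1 e2) = (Eps \<alpha> e1 \<and> Eps \<alpha> e2)"
| "Eps \<alpha> (Star e) = True"

definition EpsSet :: "'t atom \<Rightarrow> ('p, 't) kat set \<Rightarrow> bool" where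
  "EpsSet \<alpha> E = (\<exists>e\<in>E. Eps \<alpha> e)"

definition cdot :: "(('t atom \<times> 'p) \<times> ('p, 't) kat) set \<Rightarrow> ('p, 't) kat
    \<Rightarrow> (('t atom \<times> 'p) \<times> ('p, 't) kat) set" where
  "cdot P e = (if e = Test BZero then {}
               else if e = Test BOne then P
               else {(ap, Times e' e) | ap e'. (ap, e') \<in> P})"

fun ff :: "('p, 't) kat \<Rightarrow> (('t atom \<times> 'p) \<times> ('p, 't) kat) set" where
  "ff (Act p) = {((\<alpha>, p), Test BOne) | \<alpha>. True}"
| "ff (Test b) = {}"
| "ff (Plus e1 e2) = ff e1 \<union> ff e2"
| "ff (Times e1 e2) = cdot (ff e1) e2 \<union> {((\<alpha>, p), e) | \<alpha> p e. ((\<alpha>, p), e) \<in> ff e2 \<and> Eps \<alpha> e1}"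
| "ff (Star e) = cdot (ff e) (Star e)"

definition ffSet :: "('p, 't) kat set \<Rightarrow> (('t atom \<times> 'p) \<times> ('p, 't) kat) set" where
  "ffSet E = (\<Union>e\<in>E. ff e)"

definition der :: "'t atom \<times> 'p \<Rightarrow> ('p, 't) kat set \<Rightarrow> ('p, 't) kat set" where
  "der ap E = {e'. (ap, e') \<in> ffSet E}"

definition hds :: "('p, 't) kat set \<Rightarrow> ('t atom \<times> 'p) set" where
  "hds E = {ap. \<exists>e'. (ap, e') \<in> ffSet E}"

definition derivatives :: "('p, 't) kat set \<Rightarrow> ('p, 't) kat set
    \<Rightarrow> (('p, 't) kat set \<times> ('p, 't) kat set) set" where
  "derivatives E1 E2 = {(der ap E1, der ap E2) | ap. ap \<in> hds (E1 \<union> E2)}"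

type_synonym ('p, 't) state =
  "(('p, 't) kat set \<times> ('p, 't) kat set) set \<times> (('p, 't) kat set \<times> ('p, 't) kat set) set"

text \<open>One recursive call of equiv(S,H): a pair (E1,E2) of S is chosen, the test on
 atoms passes (otherwise False is returned and no recursive call happens), and the
 procedure recurses on (S0 \<union> S', H').\<close>
definition equiv_step :: "('p, 't) state \<Rightarrow> ('p, 't) state \<Rightarrow> bool" where
  "equiv_step st st' = (\<exists>E1 E2. (E1, E2) \<in> fst st
     \<and> (\<forall>\<alpha>. EpsSet \<alpha> E1 = EpsSet \<alpha> E2)
     \<and> snd st' = insert (E1, E2) (snd st)
     \<and> fst st' = (fst st - {(E1, E2)})
                  \<union> {d \<in> derivatives E1 E2. d \<notin> insert (E1, E2) (snd st)})"

end

theory Submission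
  imports Defs
begin

(* Every expression reachable from e by repeatedly taking
   right components of ff lies in the finite set pder e ("partial derivatives"),
   which is closed under ff.  Hence all pairs (E1,E2) ever stored in S or H are
   pairs of subsets of the finite set C = {e1,e2} \<union> pder e1 \<union> pder e2.  Along an
   execution, S and H stay disjoint, so each recursive call moves a NEW pair into H:
   the history H grows strictly inside the finite universe Pow C \<times> Pow C, which
   rules out an infinite run. *)

(* A strictly increasing sequence of subsets of a finite set cannot be infinite:
   the n-th set has at least n elements. *)
lemma no_infinite_strict_chain:
  assumes "finite U" and sub: "\<And>n. A n \<subseteq> U" and grow: "\<And>n. A n \<subset> A (Suc n)"
  shows False
proof -
  have fin: "finite (A n)" for n
    using sub \<open>finite U\<close> by (rule finite_subset)
  have card_ge: "n \<le> card (A n)" for n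
  proof (induction n)
    case (Suc n)
    have "card (A n) < card (A (Suc n))"
      by (rule psubset_card_mono[OF fin grow])
    with Suc show ?case by simp
  qed simp
  have "card (A (Suc (card U))) \<le> card U"
    using card_mono[OF \<open>finite U\<close> sub] .
  with card_ge[of "Suc (card U)"] show False by simp
qed

(* The partial derivatives of an expression: an over-approximation of every
   expression that can occur as a right component of ff, iterated. *)
fun pder :: "('p, 't) kat \<Rightarrow> ('p, 't) kat set" where
  "pder (Act p) = {Test BOne}"
| "pder (Test b) = {}"
| "pder (Plus a b) = pder a \<union> pder b"
| "pder (Times a b) = (\<lambda>x. Times x b) ` pder a \<union> pder a \<union> pder b"
| "pder (Star a) = (\<lambda>x. Times x (Star a)) ` pder a \<union> pder a"

lemma finite_pder: "finite (pder e)"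
  by (induction e) auto

lemma ff_in_pder: "(ap, x) \<in> ff e \<Longrightarrow> x \<in> pder e"
  by (induction e arbitrary: ap x) (auto simp: cdot_def split: if_splits)

(* The only interesting cases are the products x = Times y b and
   x = Times y (Star a), whose pder is built from pder y. *)
lemma pder_trans: "x \<in> pder e \<Longrightarrow> pder x \<subseteq> pder e"
proof (induction e arbitrary: x)
  case (Times a b)
  then consider "x \<in> pder a \<or> x \<in> pder b" | y where "y \<in> pder a" "x = Times y b"
    by auto
  then show ?case
    by cases (use Times.IH in auto)
next
  case (Star a)
  then consider "x \<in> pder a" | y where "y \<in> pder a" "x = Times y (Star a)"
    by auto
  then show ?case
    by cases (use Star.IH in auto)
qed auto

definition ff_closed :: "('p, 't) kat set \<Rightarrow> bool" where
  "ff_closed C = (\<forall>e \<in> C. \<forall>ap x. (ap, x) \<in> ff e \<longrightarrow> x \<in> C)"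

lemma ff_closed_pder_hull: "ff_closed (A \<union> (\<Union>e\<in>A. pder e))"
  unfolding ff_closed_def using ff_in_pder pder_trans by fastforce

lemma der_subset_closed: "ff_closed C \<Longrightarrow> E \<subseteq> C \<Longrightarrow> der ap E \<subseteq> C"
  unfolding ff_closed_def der_def ffSet_def by blast

definition equiv_inv :: "('p, 't) kat set \<Rightarrow> ('p, 't) state \<Rightarrow> bool" where
  "equiv_inv C st = (fst st \<union> snd st \<subseteq> Pow C \<times> Pow C \<and> fst st \<inter> snd st = {})"

lemma equiv_step_inv:
  assumes C: "ff_closed C" and inv: "equiv_inv C st" and step: "equiv_step st st'"
  shows "equiv_inv C st'"
proof -
  obtain E1 E2 where p: "(E1, E2) \<in> fst st"
    and H': "snd st' = insert (E1, E2) (snd st)"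
    and S': "fst st' = (fst st - {(E1, E2)})
                  \<union> {d \<in> derivatives E1 E2. d \<notin> insert (E1, E2) (snd st)}"
    using step unfolding equiv_step_def by (elim exE conjE) (rule that)
  have S: "fst st \<subseteq> Pow C \<times> Pow C" and H: "snd st \<subseteq> Pow C \<times> Pow C"
    and disj: "fst st \<inter> snd st = {}"
    using inv unfolding equiv_inv_def by auto
  have "E1 \<subseteq> C" "E2 \<subseteq> C"
    using S p by auto
  then have "derivatives E1 E2 \<subseteq> Pow C \<times> Pow C"
    unfolding derivatives_def using der_subset_closed[OF C] by blast
  then have "fst st' \<subseteq> Pow C \<times> Pow C"
    unfolding S' using S by auto
  moreover have "snd st' \<subseteq> Pow C \<times> Pow C"
    unfolding H' using H S p by auto
  moreover have "fst st' \<inter> snd st' = {}"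
    unfolding S' H' using disj by auto
  ultimately show ?thesis
    unfolding equiv_inv_def by blast
qed

(* Since the chosen pair is pending, it is not yet visited: H grows strictly. *)
lemma equiv_step_history_grows:
  assumes inv: "equiv_inv C st" and step: "equiv_step st st'"
  shows "snd st \<subset> snd st'"
proof -
  obtain p where "p \<in> fst st" and "snd st' = insert p (snd st)"
    using step unfolding equiv_step_def by blast
  moreover have "fst st \<inter> snd st = {}"
    using inv unfolding equiv_inv_def by blast
  ultimately show ?thesis by blast
qed

theorem proposition4:
  fixes e1 e2 :: "('p::finite, 't::finite) kat"
  shows "\<not> (\<exists>X :: nat \<Rightarrow> ('p, 't) state.
            X 0 = ({({e1}, {e2})}, {}) \<and> (\<forall>n. equiv_step (X n) (X (Suc n))))"
proof
  assume "\<exists>X :: nat \<Rightarrow> ('p, 't) state.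
            X 0 = ({({e1}, {e2})}, {}) \<and> (\<forall>n. equiv_step (X n) (X (Suc n)))"
  then obtain X :: "nat \<Rightarrow> ('p, 't) state" where X0: "X 0 = ({({e1}, {e2})}, {})"
    and step: "\<And>n. equiv_step (X n) (X (Suc n))" by blast
  define C where "C = {e1, e2} \<union> (\<Union>e\<in>{e1, e2}. pder e)"
  have closed: "ff_closed C"
    unfolding C_def by (rule ff_closed_pder_hull)
  have "finite (Pow C \<times> Pow C)"
    unfolding C_def by (simp add: finite_pder)
  have inv: "equiv_inv C (X n)" for n
  proof (induction n)
    case 0
    show ?case using X0 unfolding equiv_inv_def C_def by auto
  next
    case (Suc n)
    then show ?case using equiv_step_inv[OF closed _ step] by blast
  qed
  show False
  proof (rule no_infinite_strict_chain)
    show "finite (Pow C \<times> Pow C)" by fact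
    show "snd (X n) \<subseteq> Pow C \<times> Pow C" for n
      using inv unfolding equiv_inv_def by blast
    show "snd (X n) \<subset> snd (X (Suc n))" for n
      using equiv_step_history_grows[OF inv step] .
  qed
qed

end
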